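(* Let $f,g:\mathbb{R}^n\to\mathbb{R}$ satisfy assumptions (A1)–(A4) below, let $\zeta\in[0,1)$ and $x_0\in\Omega=\{x:g(x)\le0\}$. Then the trajectory $x(t;\zeta,x_0)$ must leave the feasible set $\Omega$. Hence a solution point $x_\zeta^\sharp$ exists, i.e. there is a time $t^\sharp$ with $g(x(t^\sharp;\zeta,x_0))=0$ and $g(x(t;\zeta,x_0))<0$ for $t<t^\sharp$ (the first time the trajectory reaches the constraint boundary), and $x_\zeta^\sharp=x(t^\sharp;\zeta,x_0)$.
   Context: Assumptions: (A1) $\lim_{|x|\to\infty} f(x)=+\infty$; (A2) $\nabla f(x)\neq 0$ for all $x\in\Omega$; (A3) $\nabla g(x)\neq 0$ for all $x\in\Omega$; (A4) $f,g$ twice continuously differentiable. For $\zeta\in[0,1)$, $\mathbf{s}_\zeta(x)=-\frac{\nabla f(x)}{|\nabla f(x)|}-\zeta\frac{\nabla g(x)}{|\nabla g(x)|}$, and $x(t;\zeta,x_0)$ is the solution of $\frac{dx}{dt}=\mathbf{s}_\zeta(x)$, $x(0)=x_0$, on its maximal interval of existence in $E=\{x:\nabla f(x)\ne0,\nabla g(x)\ne0\}$. *)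

theory Defs
  imports "HOL-Analysis.Analysis"
begin

definition grad :: "('a::euclidean_space \<Rightarrow> real) \<Rightarrow> 'a \<Rightarrow> 'a" where
  "grad f x = (\<Sum>i\<in>Basis. frechet_derivative f (at x) i *\<^sub>R i)"

definition C2 :: "('a::euclidean_space \<Rightarrow> real) \<Rightarrow> bool" where
  "C2 f \<longleftrightarrow> (\<exists>(f' :: 'a \<Rightarrow> ('a \<Rightarrow>\<^sub>L real)) (f'' :: 'a \<Rightarrow> ('a \<Rightarrow>\<^sub>L ('a \<Rightarrow>\<^sub>L real))).
      (\<forall>x. (f has_derivative blinfun_apply (f' x)) (at x)) \<and>
      (\<forall>x. (f' has_derivative blinfun_apply (f'' x)) (at x)) \<and>
      continuous_on UNIV f'')"

definition Eset :: "('a::euclidean_space \<Rightarrow> real) \<Rightarrow> ('a \<Rightarrow> real) \<Rightarrow> 'a set" where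
  "Eset f g = {x. grad f x \<noteq> 0 \<and> grad g x \<noteq> 0}"

definition sfield :: "('a::euclidean_space \<Rightarrow> real) \<Rightarrow> ('a \<Rightarrow> real) \<Rightarrow> real \<Rightarrow> 'a \<Rightarrow> 'a" where
  "sfield f g \<zeta> x = - ((1 / norm (grad f x)) *\<^sub>R grad f x) - (\<zeta> / norm (grad g x)) *\<^sub>R grad g x"

definition is_sol ::
  "('a::euclidean_space \<Rightarrow> real) \<Rightarrow> ('a \<Rightarrow> real) \<Rightarrow> real \<Rightarrow> 'a \<Rightarrow> real set \<Rightarrow> (real \<Rightarrow> 'a) \<Rightarrow> bool" where
  "is_sol f g \<zeta> x0 J x \<longleftrightarrow> is_interval J \<and> open J \<and> 0 \<in> J \<and> x 0 = x0 \<and>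
     (\<forall>t\<in>J. x t \<in> Eset f g \<and> (x has_vector_derivative sfield f g \<zeta> (x t)) (at t))"

definition is_max_sol ::
  "('a::euclidean_space \<Rightarrow> real) \<Rightarrow> ('a \<Rightarrow> real) \<Rightarrow> real \<Rightarrow> 'a \<Rightarrow> real set \<Rightarrow> (real \<Rightarrow> 'a) \<Rightarrow> bool" where
  "is_max_sol f g \<zeta> x0 J x \<longleftrightarrow> is_sol f g \<zeta> x0 J x \<and>
     (\<forall>J' y. is_sol f g \<zeta> x0 J' y \<and> J \<subseteq> J' \<and> (\<forall>t\<in>J. y t = x t) \<longrightarrow> J' = J)"

end

(* Along a trajectory, d/dt f(x t) = grad f . s_zeta <= -(1 - zeta) |grad f|, since the zeta-term
   can cancel at most a zeta-fraction of the steepest-descent term.  If the trajectory stayed in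
   Omega = {g <= 0} for all t >= 0, it would remain in the compact set Omega \<inter> {f <= f x0}, on which
   |grad f| >= c > 0 by (A1) and (A2); so f would decrease at least linearly and the forward
   existence time would be finite.  As |s_zeta| <= 1 + zeta, x(t) then converges at the right end T
   of its interval to a point of Omega, where both gradients are nonzero.  By (A4) s_zeta is
   Lipschitz near that point, so Picard iteration continues the trajectory past T, contradicting
   maximality.  The first boundary time is the infimum of {t >= 0. g (x t) >= 0}. *)

theory Submission
  imports Defs
begin

lemma lipschitz_on_sgn:
  fixes m :: real
  assumes "0 < m"
  shows "(2 / m)-lipschitz_on {v :: 'a::real_normed_vector. m \<le> norm v} sgn"
proof (rule lipschitz_onI)
  fix v w :: 'a assume "v \<in> {v. m \<le> norm v}" "w \<in> {v. m \<le> norm v}"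
  then have m: "m \<le> norm v" "m \<le> norm w" by auto
  then have nz: "norm v > 0" "norm w > 0" using assms by linarith+
  have "(norm w - norm v) / norm v * inverse (norm w) = 1 / norm v - inverse (norm w)"
    using nz by (simp add: field_simps)
  then have "((norm w - norm v) / norm v) *\<^sub>R sgn w = (1 / norm v) *\<^sub>R w - sgn w"
    by (simp only: sgn_div_norm scaleR_scaleR scaleR_diff_left divide_inverse_commute)
  then have "sgn v - sgn w = (1 / norm v) *\<^sub>R (v - w) + ((norm w - norm v) / norm v) *\<^sub>R sgn w"
    by (simp add: sgn_div_norm scaleR_diff_right divide_inverse_commute)
  also have "norm \<dots> \<le> norm (v - w) / norm v + \<bar>norm w - norm v\<bar> / norm v"
    using norm_triangle_ineq[of "(1 / norm v) *\<^sub>R (v - w)" "((norm w - norm v) / norm v) *\<^sub>R sgn w"] nz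
    by (simp add: norm_sgn)
  also have "\<dots> = (norm (v - w) + \<bar>norm w - norm v\<bar>) / norm v"
    by (simp add: add_divide_distrib)
  also have "\<dots> \<le> 2 * norm (v - w) / norm v"
    by (rule divide_right_mono) (use norm_triangle_ineq3[of w v] in \<open>auto simp: norm_minus_commute\<close>)
  also have "\<dots> \<le> 2 * norm (v - w) / m"
    by (rule divide_left_mono) (use m nz assms in auto)
  finally show "dist (sgn v) (sgn w) \<le> 2 / m * dist v w"
    by (simp add: dist_norm)
qed (use assms in simp)

lemma open_interval_Sup:
  fixes J :: "real set"
  assumes "is_interval J" and "open J" and "a \<in> J" and "bdd_above J"
  shows "Sup J \<notin> J" and "a < Sup J" and "{a..<Sup J} \<subseteq> J"
proof -
  have "\<forall>t\<in>J. t < Sup J + 1"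
    using cSup_upper[OF _ assms(4)] by fastforce
  then show "Sup J \<notin> J"
    using Sup_notin_open[OF assms(2)] by blast
  then show "a < Sup J"
    using cSup_upper[OF assms(3,4)] assms(3) by (auto simp: le_less)
  show "{a..<Sup J} \<subseteq> J"
  proof
    fix t assume "t \<in> {a..<Sup J}"
    then obtain s where "s \<in> J" and "t < s"
      using less_cSupD[of J t] assms(3) by auto
    then show "t \<in> J"
      using mem_is_interval_1_I[OF assms(1,3) \<open>s \<in> J\<close>, of t] \<open>t \<in> {a..<Sup J}\<close> by simp
  qed
qed

lemma lipschitz_on_tendsto_at_left:
  fixes x :: "real \<Rightarrow> 'a::complete_space"
  assumes "L-lipschitz_on {a..<b} x" and "a < b"
  obtains l where "(x \<longlongrightarrow> l) (at_left b)"
proof -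
  obtain y where y: "L-lipschitz_on {a..b} y" and xy: "\<forall>t\<in>{a..<b}. y t = x t"
    using lipschitz_extend_closure[OF assms(1)] assms(2) by auto
  have "(y \<longlongrightarrow> y b) (at_left b)"
    using lipschitz_on_continuous_on[OF y] assms(2)
    by (simp add: continuous_on_Icc_at_leftD)
  moreover have "eventually (\<lambda>t. y t = x t) (at_left b)"
    using xy assms(2) by (auto simp: eventually_at_left_field intro!: exI[of _ a])
  ultimately show ?thesis
    using that tendsto_cong by blast
qed

lemma IVT_first_zero:
  fixes h :: "real \<Rightarrow> real"
  assumes "a \<le> b" and "continuous_on {a..b} h" and "h a \<le> 0" and "0 < h b"
  obtains s where "s \<in> {a..b}" and "h s = 0" and "\<And>t. a \<le> t \<Longrightarrow> t < s \<Longrightarrow> h t < 0"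
proof -
  define S where "S = {t \<in> {a..b}. 0 \<le> h t}"
  have "S = {a..b} \<inter> h -` {0..}"
    by (auto simp: S_def)
  then have "closed S"
    using continuous_closed_preimage[OF assms(2)] by simp
  moreover have "b \<in> S" and "bdd_below S"
    using assms by (auto simp: S_def intro: bdd_belowI[of _ a])
  ultimately have "Inf S \<in> S"
    using closed_contains_Inf by blast
  have below: "h t < 0" if "a \<le> t" "t < Inf S" for t
    using cInf_lower[OF _ \<open>bdd_below S\<close>, of t] that \<open>Inf S \<in> S\<close> by (force simp: S_def)
  have "h (Inf S) = 0"
  proof (cases "Inf S = a")
    case True
    then show ?thesis
      using \<open>Inf S \<in> S\<close> assms(3) by (simp add: S_def)
  next
    case False
    then have "a < Inf S" and "0 \<le> h (Inf S)"
      using \<open>Inf S \<in> S\<close> by (auto simp: S_def)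
    moreover have "continuous_on {a..Inf S} h"
      using \<open>Inf S \<in> S\<close> by (intro continuous_on_subset[OF assms(2)]) (auto simp: S_def)
    ultimately obtain s where "a \<le> s" "s \<le> Inf S" "h s = 0"
      using IVT'[of h a 0 "Inf S"] assms(3) by auto
    then show ?thesis
      using below by force
  qed
  then show ?thesis
    using that \<open>Inf S \<in> S\<close> below by (auto simp: S_def)
qed

lemma compact_sublevel_set:
  fixes f :: "'a::{heine_borel,real_normed_vector} \<Rightarrow> real"
  assumes "filterlim f at_top at_infinity" and "continuous_on UNIV f" and "closed S"
  shows "compact {y \<in> S. f y \<le> c}"
proof -
  obtain b where b: "\<And>y. b \<le> norm y \<Longrightarrow> c < f y"
    using assms(1) unfolding filterlim_at_top_dense eventually_at_infinity by blast
  then have "{y \<in> S. f y \<le> c} \<subseteq> cball 0 b"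
    by (force simp: not_le[symmetric])
  moreover have "closed (S \<inter> {y. f y \<le> c})"
    using assms(3) closed_Collect_le[OF assms(2) continuous_on_const] by (rule closed_Int)
  then have "closed {y \<in> S. f y \<le> c}"
    by (simp add: Collect_conj_eq Int_commute)
  ultimately show ?thesis
    by (meson bounded_cball bounded_subset compact_eq_bounded_closed)
qed

section \<open>Picard-Lindeloef on short intervals\<close>

lemma clamp_real_in_Icc: "a \<le> b \<Longrightarrow> clamp a b (t::real) \<in> {a..b}"
  using clamp_in_interval[of a b t] by simp

text \<open>The time variable is clamped to \<open>[a, b]\<close> so that the Picard iterate is a bounded continuous
  function on the whole real line.\<close>
definition picard_map ::
  "('a::banach \<Rightarrow> 'a) \<Rightarrow> 'a \<Rightarrow> real \<Rightarrow> real \<Rightarrow> (real \<Rightarrow>\<^sub>C 'a) \<Rightarrow> real \<Rightarrow>\<^sub>C 'a" where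
  "picard_map F p a b \<phi> = Bcontfun (\<lambda>t. p + integral {a..clamp a b t} (\<lambda>s. F (\<phi> s)))"

lemma picard_map_apply:
  fixes \<phi> :: "real \<Rightarrow>\<^sub>C 'a::banach"
  assumes "a \<le> b" and "continuous_on {a..b} (\<lambda>s. F (\<phi> s))"
  shows "picard_map F p a b \<phi> t = p + integral {a..clamp a b t} (\<lambda>s. F (\<phi> s))"
proof -
  have "continuous_on {a..b} (\<lambda>t. integral {a..t} (\<lambda>s. F (\<phi> s)))"
    using assms(2) by (intro indefinite_integral_continuous_1 integrable_continuous_real)
  then have "continuous_on (cbox a b) (\<lambda>t. p + integral {a..t} (\<lambda>s. F (\<phi> s)))"
    by (simp add: continuous_on_add)
  then obtain h :: "real \<Rightarrow>\<^sub>C 'a" where h: "\<And>t. h t = p + integral {a..clamp a b t} (\<lambda>s. F (\<phi> s))"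
    using continuous_on_cbox_bcontfunE by blast
  then have "(\<lambda>t. p + integral {a..clamp a b t} (\<lambda>s. F (\<phi> s))) = h"
    by auto
  then show ?thesis
    unfolding picard_map_def using h by (simp add: apply_bcontfun_inverse)
qed

lemma continuous_on_comp_PiC:
  assumes "continuous_on (cball p r) F" and "\<phi> \<in> PiC UNIV (\<lambda>_. cball p r)"
  shows "continuous_on S (\<lambda>s. F (\<phi> s))"
  using assms by (intro continuous_on_compose2[OF _ continuous_on_apply_bcontfun]) (auto simp: mem_PiC_iff)

lemma picard_map_PiC_cball:
  assumes "a \<le> b" and F: "continuous_on (cball p r) F" "\<forall>y\<in>cball p r. norm (F y) \<le> M"
    and "(b - a) * M \<le> r" and \<phi>: "\<phi> \<in> PiC UNIV (\<lambda>_. cball p r)"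
  shows "picard_map F p a b \<phi> \<in> PiC UNIV (\<lambda>_. cball p r)"
proof -
  have "\<phi> 0 \<in> cball p r"
    using \<phi> by (simp add: mem_PiC_iff Pi_iff)
  then have "0 \<le> M"
    using F(2) norm_ge_zero order_trans by blast
  have "dist p (picard_map F p a b \<phi> t) \<le> r" for t
  proof -
    let ?c = "clamp a b t"
    have "?c \<in> {a..b}"
      using assms(1) by (rule clamp_real_in_Icc)
    have "norm (integral {a..?c} (\<lambda>s. F (\<phi> s))) \<le> M * (?c - a)"
      using \<open>?c \<in> {a..b}\<close> \<phi> F by (intro integral_bound continuous_on_comp_PiC) (auto simp: mem_PiC_iff)
    also have "\<dots> \<le> (b - a) * M"
      using \<open>?c \<in> {a..b}\<close> \<open>0 \<le> M\<close> by (simp add: mult.commute mult_left_mono)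
    finally show ?thesis
      using assms picard_map_apply[OF assms(1) continuous_on_comp_PiC[OF F(1) \<phi>]] by (simp add: dist_norm)
  qed
  then show ?thesis
    by (simp add: mem_PiC_iff)
qed

lemma picard_map_contraction:
  assumes "a \<le> b" and L: "L-lipschitz_on (cball p r) F"
    and \<phi>: "\<phi> \<in> PiC UNIV (\<lambda>_. cball p r)" and \<psi>: "\<psi> \<in> PiC UNIV (\<lambda>_. cball p r)"
  shows "dist (picard_map F p a b \<phi>) (picard_map F p a b \<psi>) \<le> (b - a) * L * dist \<phi> \<psi>"
proof (rule dist_bound)
  fix t
  let ?c = "clamp a b t"
  have "?c \<in> {a..b}"
    using assms(1) by (rule clamp_real_in_Icc)
  have Fc: "continuous_on (cball p r) F"
    using L by (rule lipschitz_on_continuous_on)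
  have "(\<lambda>s. F (\<phi> s)) integrable_on {a..?c}" and "(\<lambda>s. F (\<psi> s)) integrable_on {a..?c}"
    by (intro integrable_continuous_real continuous_on_comp_PiC[OF Fc] \<phi> \<psi>)+
  then have "dist (picard_map F p a b \<phi> t) (picard_map F p a b \<psi> t)
      = norm (integral {a..?c} (\<lambda>s. F (\<phi> s) - F (\<psi> s)))"
    by (simp add: picard_map_apply[OF assms(1) continuous_on_comp_PiC[OF Fc \<phi>]]
        picard_map_apply[OF assms(1) continuous_on_comp_PiC[OF Fc \<psi>]] dist_norm integral_diff)
  also have "\<dots> \<le> (L * dist \<phi> \<psi>) * (?c - a)"
  proof (rule integral_bound)
    show "continuous_on {a..?c} (\<lambda>s. F (\<phi> s) - F (\<psi> s))"
      by (intro continuous_intros continuous_on_comp_PiC[OF Fc] \<phi> \<psi>)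
    fix s
    have "norm (F (\<phi> s) - F (\<psi> s)) \<le> L * norm (\<phi> s - \<psi> s)"
      using lipschitz_on_normD[OF L, of "\<phi> s" "\<psi> s"] \<phi> \<psi> by (simp add: mem_PiC_iff Pi_iff)
    also have "\<dots> \<le> L * dist \<phi> \<psi>"
      using dist_bounded[of \<phi> s \<psi>] lipschitz_on_nonneg[OF L] by (simp add: dist_norm mult_left_mono)
    finally show "norm (F (\<phi> s) - F (\<psi> s)) \<le> L * dist \<phi> \<psi>" .
  qed (use \<open>?c \<in> {a..b}\<close> in simp)
  also have "\<dots> \<le> (L * dist \<phi> \<psi>) * (b - a)"
    using \<open>?c \<in> {a..b}\<close> lipschitz_on_nonneg[OF L] by (intro mult_left_mono) auto
  also have "\<dots> = (b - a) * L * dist \<phi> \<psi>"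
    by simp
  finally show "dist (picard_map F p a b \<phi> t) (picard_map F p a b \<psi> t) \<le> (b - a) * L * dist \<phi> \<psi>" .
qed

lemma picard_local_existence:
  fixes F :: "'a::banach \<Rightarrow> 'a"
  assumes "a \<le> b" and "0 \<le> r" and L: "L-lipschitz_on (cball p r) F" and M: "\<forall>y\<in>cball p r. norm (F y) \<le> M"
    and "(b - a) * M \<le> r" and "(b - a) * L < 1"
  obtains z where "z a = p" and "\<And>t. t \<in> {a..b} \<Longrightarrow> z t \<in> cball p r"
    and "\<And>t. t \<in> {a..b} \<Longrightarrow> (z has_vector_derivative F (z t)) (at t within {a..b})"
proof -
  let ?S = "PiC (UNIV :: real set) (\<lambda>_. cball p r)"
  have Fc: "continuous_on (cball p r) F"
    using L by (rule lipschitz_on_continuous_on)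
  have "const_bcontfun p \<in> ?S"
    using assms(2) by (simp add: mem_PiC_iff)
  then have "?S \<noteq> {}"
    by blast
  moreover have "complete ?S"
    by (simp add: complete_eq_closed closed_PiC)
  moreover have "0 \<le> (b - a) * L"
    using assms(1) lipschitz_on_nonneg[OF L] by simp
  moreover have "picard_map F p a b ` ?S \<subseteq> ?S"
    using picard_map_PiC_cball[OF assms(1) Fc M \<open>(b - a) * M \<le> r\<close>] by blast
  ultimately have "\<exists>!\<phi>. \<phi> \<in> ?S \<and> picard_map F p a b \<phi> = \<phi>"
    using Banach_fix[OF _ _ _ \<open>(b - a) * L < 1\<close> _ picard_map_contraction[OF assms(1) L]] by blast
  then obtain \<phi> where \<phi>: "\<phi> \<in> ?S" and fixpoint: "picard_map F p a b \<phi> = \<phi>"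
    by blast
  have \<phi>_eq: "\<phi> t = p + integral {a..t} (\<lambda>s. F (\<phi> s))" if "t \<in> {a..b}" for t
    using picard_map_apply[OF assms(1) continuous_on_comp_PiC[OF Fc \<phi>], of p t] fixpoint that by simp
  show ?thesis
  proof
    show "\<phi> a = p"
      using \<phi>_eq[of a] assms(1) by simp
    fix t assume t: "t \<in> {a..b}"
    show "\<phi> t \<in> cball p r"
      using \<phi> by (simp add: mem_PiC_iff Pi_iff)
    have deriv: "((\<lambda>t. p + integral {a..t} (\<lambda>s. F (\<phi> s))) has_vector_derivative F (\<phi> t)) (at t within {a..b})"
      using has_vector_derivative_add[OF has_vector_derivative_const
          integral_has_vector_derivative[OF continuous_on_comp_PiC[OF Fc \<phi>] t]] by simp
    show "(\<phi> has_vector_derivative F (\<phi> t)) (at t within {a..b})"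
      by (rule has_vector_derivative_transform[OF t \<phi>_eq deriv])
  qed
qed

lemma picard_uniform_local_existence:
  fixes F :: "'a::banach \<Rightarrow> 'a"
  assumes "0 < R" and L: "L-lipschitz_on (cball c R) F" and M: "\<forall>y\<in>cball c R. norm (F y) \<le> M"
  obtains \<delta> where "0 < \<delta>" and "\<delta> * L < 1"
    and "\<And>p t0. dist c p < R / 2 \<Longrightarrow> \<exists>z. z t0 = p \<and> (\<forall>t\<in>{t0..t0+\<delta>}. z t \<in> cball c R \<and>
           (z has_vector_derivative F (z t)) (at t within {t0..t0+\<delta>}))"
proof -
  define \<delta> where "\<delta> = min (R / 2 / (M + 1)) (1 / (L + 1))"
  have "0 \<le> L"
    using L by (rule lipschitz_on_nonneg)
  have "0 \<le> M"
    using M \<open>0 < R\<close> norm_ge_zero order_trans by (metis centre_in_cball less_imp_le)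
  then have "\<delta> > 0"
    using \<open>R > 0\<close> \<open>0 \<le> L\<close> by (simp add: \<delta>_def)
  have "\<delta> \<le> R / 2 / (M + 1)"
    by (simp add: \<delta>_def)
  then have "\<delta> * (M + 1) \<le> R / 2"
    using \<open>0 \<le> M\<close> by (subst (asm) pos_le_divide_eq) auto
  then have "\<delta> * M \<le> R / 2"
    using \<open>\<delta> > 0\<close> by (simp add: algebra_simps)
  have "\<delta> * L \<le> 1 / (L + 1) * L"
    using \<open>0 \<le> L\<close> by (intro mult_right_mono) (simp_all add: \<delta>_def)
  also have "\<dots> < 1"
    using \<open>0 \<le> L\<close> by simp
  finally have "\<delta> * L < 1" .
  have "\<exists>z. z t0 = p \<and> (\<forall>t\<in>{t0..t0+\<delta>}. z t \<in> cball c R \<and>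
           (z has_vector_derivative F (z t)) (at t within {t0..t0+\<delta>}))"
    if "dist c p < R / 2" for p t0
  proof -
    have ball: "cball p (R / 2) \<subseteq> cball c R"
    proof
      fix y assume "y \<in> cball p (R / 2)"
      then show "y \<in> cball c R"
        using dist_triangle[of c y p] that by simp
    qed
    obtain z where "z t0 = p" and "\<And>t. t \<in> {t0..t0+\<delta>} \<Longrightarrow> z t \<in> cball p (R / 2)"
      and "\<And>t. t \<in> {t0..t0+\<delta>} \<Longrightarrow> (z has_vector_derivative F (z t)) (at t within {t0..t0+\<delta>})"
      using picard_local_existence[of t0 "t0 + \<delta>" "R / 2" L p F M] M ball
        \<open>\<delta> > 0\<close> \<open>R > 0\<close> \<open>\<delta> * M \<le> R / 2\<close> \<open>\<delta> * L < 1\<close> lipschitz_on_subset[OF L ball]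
      by auto
    then show ?thesis
      using ball by blast
  qed
  then show ?thesis
    using that \<open>\<delta> > 0\<close> \<open>\<delta> * L < 1\<close> by blast
qed

lemma ode_solutions_eq_on_short_interval:
  fixes u v :: "real \<Rightarrow> 'a::real_normed_vector"
  assumes L: "L-lipschitz_on S F" and "(b - a) * L < 1"
    and uv: "\<And>s. s \<in> {a..b} \<Longrightarrow> u s \<in> S \<and> v s \<in> S"
    and u: "\<And>s. s \<in> {a..b} \<Longrightarrow> (u has_vector_derivative F (u s)) (at s within {a..b})"
    and v: "\<And>s. s \<in> {a..b} \<Longrightarrow> (v has_vector_derivative F (v s)) (at s within {a..b})"
    and "u a = v a" and t: "t \<in> {a..b}"
  shows "u t = v t"
proof -
  txt \<open>The maximal deviation \<open>D\<close> on \<open>[a, b]\<close> satisfies \<open>D \<le> (b - a) L D\<close>.\<close>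
  let ?w = "\<lambda>s. u s - v s"
  have w: "(?w has_vector_derivative F (u s) - F (v s)) (at s within {a..b})" if "s \<in> {a..b}" for s
    using u[OF that] v[OF that] by (rule has_vector_derivative_diff)
  then have "continuous_on {a..b} ?w"
    using continuous_on_eq_continuous_within has_vector_derivative_continuous by blast
  then have "continuous_on {a..b} (\<lambda>s. norm (?w s))"
    by (rule continuous_on_norm)
  moreover have "{a..b} \<noteq> {}"
    using t by auto
  ultimately obtain m where m: "m \<in> {a..b}" and max: "\<And>s. s \<in> {a..b} \<Longrightarrow> norm (?w s) \<le> norm (?w m)"
    using continuous_attains_sup[OF compact_Icc] by blast
  define D where "D = norm (?w m)"
  have "0 \<le> L"
    using L by (rule lipschitz_on_nonneg)
  have "onorm (\<lambda>h. h *\<^sub>R (F (u s) - F (v s))) \<le> L * D" if "s \<in> {a..b}" for s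
  proof -
    have "norm (F (u s) - F (v s)) \<le> L * norm (?w s)"
      using lipschitz_on_normD[OF L] uv[OF that] by blast
    also have "\<dots> \<le> L * D"
      unfolding D_def using max[OF that] \<open>0 \<le> L\<close> by (rule mult_left_mono)
    finally show ?thesis
      by (simp add: onorm_scaleR_left onorm_id)
  qed
  then have "(L * D)-lipschitz_on {a..b} ?w"
    using w \<open>0 \<le> L\<close> by (intro bounded_derivative_imp_lipschitz) (auto simp: has_vector_derivative_def D_def)
  then have "D \<le> L * D * (m - a)"
    using lipschitz_on_normD[of "L * D" "{a..b}" ?w m a] m t \<open>u a = v a\<close> by (simp add: D_def)
  also have "\<dots> \<le> L * D * (b - a)"
    using m \<open>0 \<le> L\<close> by (intro mult_left_mono) (auto simp: D_def)
  finally have "D * (1 - (b - a) * L) \<le> 0"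
    by (simp add: algebra_simps)
  then have "D \<le> 0"
    using \<open>(b - a) * L < 1\<close> by (simp add: mult_le_0_iff)
  then show ?thesis
    using max[OF t] by (simp add: D_def)
qed

section \<open>Gradients of \<open>C2\<close> functions\<close>

lemma grad_inner_eq:
  assumes "(f has_derivative blinfun_apply D) (at y)"
  shows "grad f y \<bullet> v = D v"
proof -
  have "grad f y \<bullet> v = (\<Sum>i\<in>Basis. D i * (i \<bullet> v))"
    using frechet_derivative_at[OF assms] by (simp add: grad_def inner_sum_left)
  also have "\<dots> = D (\<Sum>i\<in>Basis. (v \<bullet> i) *\<^sub>R i)"
    by (simp add: blinfun.sum_right blinfun.scaleR_right inner_commute mult.commute)
  finally show ?thesis by (simp add: euclidean_representation)
qed

lemma norm_grad_diff_le:
  assumes "(f has_derivative blinfun_apply D) (at y)" and "(f has_derivative blinfun_apply E) (at w)"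
  shows "norm (grad f y - grad f w) \<le> norm (D - E)"
proof -
  let ?d = "grad f y - grad f w"
  have "norm ?d * norm ?d = (D - E) ?d"
    by (simp add: inner_diff_left blinfun.diff_left grad_inner_eq[OF assms(1)] grad_inner_eq[OF assms(2)]
        flip: dot_square_norm power2_eq_square)
  also have "\<dots> \<le> norm (D - E) * norm ?d"
    using norm_blinfun[of "D - E" ?d] by simp
  finally have "norm ?d * norm ?d \<le> norm (D - E) * norm ?d" .
  then show ?thesis
    by (cases "?d = 0") (auto dest: mult_right_le_imp_le)
qed

lemma C2E:
  assumes "C2 f"
  obtains f' f'' where "\<And>x. (f has_derivative blinfun_apply (f' x)) (at x)"
    and "\<And>x. (f' has_derivative blinfun_apply (f'' x)) (at x)" and "continuous_on UNIV f''"
  using assms unfolding C2_def by blast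

lemma C2_has_derivative_grad:
  assumes "C2 f"
  shows "(f has_derivative (\<lambda>v. grad f y \<bullet> v)) (at y)"
proof -
  obtain f' where f': "\<And>x. (f has_derivative blinfun_apply (f' x)) (at x)"
    using C2E[OF assms] by metis
  have "(\<lambda>v. grad f y \<bullet> v) = f' y"
    using grad_inner_eq[OF f'] by blast
  then show ?thesis
    using f' by simp
qed

lemma C2_continuous_on: "C2 f \<Longrightarrow> continuous_on S f"
  by (simp add: continuous_at_imp_continuous_on has_derivative_continuous[OF C2_has_derivative_grad])

lemma C2_grad_lipschitz_on:
  assumes "C2 f" and "bounded S"
  shows "\<exists>L. L-lipschitz_on S (grad f)"
proof -
  obtain f' f'' where f': "\<And>x. (f has_derivative blinfun_apply (f' x)) (at x)"
    and f'': "\<And>x. (f' has_derivative blinfun_apply (f'' x)) (at x)" and "continuous_on UNIV f''"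
    using C2E[OF assms(1)] by metis
  obtain c R where S: "S \<subseteq> cball c R"
    using assms(2) bounded_subset_cball by blast
  have "compact (f'' ` cball c R)"
    using \<open>continuous_on UNIV f''\<close> by (intro compact_continuous_image) (auto intro: continuous_on_subset)
  then obtain B where "B > 0" and B: "\<And>y. y \<in> cball c R \<Longrightarrow> norm (f'' y) \<le> B"
    using compact_imp_bounded bounded_pos by (metis imageI)
  have "B-lipschitz_on (cball c R) f'"
    by (rule bounded_derivative_imp_lipschitz[OF has_derivative_at_withinI[OF f'']])
      (use B \<open>B > 0\<close> in \<open>simp_all flip: norm_blinfun.rep_eq\<close>)
  then have "B-lipschitz_on (cball c R) (grad f)"
    unfolding lipschitz_on_def dist_norm using norm_grad_diff_le[OF f' f'] order_trans by blast
  then show ?thesis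
    using S lipschitz_on_subset by blast
qed

lemma C2_continuous_on_grad:
  assumes "C2 f"
  shows "continuous_on S (grad f)"
proof (rule continuous_at_imp_continuous_on, intro ballI)
  fix y
  obtain L where "L-lipschitz_on (ball y 1) (grad f)"
    using C2_grad_lipschitz_on[OF assms bounded_ball] by blast
  then show "isCont (grad f) y"
    by (meson lipschitz_on_continuous_on centre_in_ball continuous_on_eq_continuous_at open_ball zero_less_one)
qed

section \<open>The vector field \<open>s\<^sub>\<zeta>\<close>\<close>

lemma sfield_eq_sgn: "sfield f g \<zeta> y = - sgn (grad f y) - \<zeta> *\<^sub>R sgn (grad g y)"
  by (simp add: sfield_def sgn_div_norm divide_inverse_commute)

lemma norm_sfield_le: "norm (sfield f g \<zeta> y) \<le> 1 + \<bar>\<zeta>\<bar>"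
proof -
  have "norm (sfield f g \<zeta> y) \<le> norm (sgn (grad f y)) + \<bar>\<zeta>\<bar> * norm (sgn (grad g y))"
    unfolding sfield_eq_sgn by (metis norm_minus_cancel norm_scaleR norm_triangle_ineq4)
  also have "\<dots> \<le> 1 + \<bar>\<zeta>\<bar>"
    by (intro add_mono mult_left_le) (auto simp: norm_sgn)
  finally show ?thesis .
qed

lemma inner_grad_sfield_le:
  assumes "0 \<le> \<zeta>"
  shows "grad f y \<bullet> sfield f g \<zeta> y \<le> - (1 - \<zeta>) * norm (grad f y)"
proof -
  have "grad f y \<bullet> sgn (grad f y) = norm (grad f y)"
    by (cases "grad f y = 0") (simp_all add: sgn_div_norm dot_square_norm power2_eq_square)
  moreover have "- (grad f y \<bullet> sgn (grad g y)) \<le> norm (grad f y)"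
    using Cauchy_Schwarz_ineq2[of "grad f y" "sgn (grad g y)"]
    by (auto simp: norm_sgn split: if_splits)
  ultimately show ?thesis
    using mult_left_mono[OF _ assms] by (fastforce simp: sfield_eq_sgn inner_diff_right algebra_simps)
qed

lemma sfield_locally_lipschitz:
  assumes "C2 f" and "C2 g" and "p \<in> Eset f g"
  obtains R L where "R > 0" and "cball p R \<subseteq> Eset f g" and "L-lipschitz_on (cball p R) (sfield f g \<zeta>)"
proof -
  define m where "m = min (norm (grad f p)) (norm (grad g p)) / 2"
  define U where "U = {y. m < norm (grad f y) \<and> m < norm (grad g y)}"
  have pos: "0 < norm (grad f p)" "0 < norm (grad g p)"
    using assms(3) by (auto simp: Eset_def)
  then have "m > 0"
    by (simp add: m_def)
  have "m < norm (grad f p)" and "m < norm (grad g p)"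
    unfolding m_def using pos min.cobounded1[of "norm (grad f p)" "norm (grad g p)"]
      min.cobounded2[of "norm (grad f p)" "norm (grad g p)"] by linarith+
  then have "p \<in> U"
    by (simp add: U_def)
  have "continuous_on UNIV (\<lambda>y. norm (grad f y))" and "continuous_on UNIV (\<lambda>y. norm (grad g y))"
    by (intro continuous_on_norm C2_continuous_on_grad assms)+
  then have "open U"
    unfolding U_def by (intro open_Collect_conj open_Collect_less continuous_on_const)
  then obtain R where "R > 0" and R: "cball p R \<subseteq> U"
    using \<open>p \<in> U\<close> open_contains_cball by blast
  obtain Lf where Lf: "Lf-lipschitz_on (cball p R) (grad f)"
    using C2_grad_lipschitz_on[OF assms(1) bounded_cball] by blast
  obtain Lg where Lg: "Lg-lipschitz_on (cball p R) (grad g)"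
    using C2_grad_lipschitz_on[OF assms(2) bounded_cball] by blast
  have "grad f ` cball p R \<subseteq> {v. m \<le> norm v}" and "grad g ` cball p R \<subseteq> {v. m \<le> norm v}"
    using R by (auto simp: U_def)
  then have "(2 / m)-lipschitz_on (grad f ` cball p R) sgn" and "(2 / m)-lipschitz_on (grad g ` cball p R) sgn"
    by (auto intro: lipschitz_on_subset[OF lipschitz_on_sgn[OF \<open>m > 0\<close>]])
  then have "(2 / m * Lf + \<bar>\<zeta>\<bar> * (2 / m * Lg))-lipschitz_on (cball p R) (sfield f g \<zeta>)"
    unfolding sfield_eq_sgn
    by (intro lipschitz_on_diff lipschitz_on_minus lipschitz_on_cmult lipschitz_on_compose2[OF Lf]
        lipschitz_on_compose2[OF Lg])
  moreover have "cball p R \<subseteq> Eset f g"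
    using R \<open>m > 0\<close> by (auto simp: U_def Eset_def)
  ultimately show ?thesis
    using \<open>R > 0\<close> that by blast
qed

section \<open>Trajectories\<close>

lemma is_solD:
  assumes "is_sol f g \<zeta> x0 J x"
  shows "is_interval J" and "open J" and "0 \<in> J" and "x 0 = x0"
    and "\<And>t. t \<in> J \<Longrightarrow> x t \<in> Eset f g"
    and "\<And>t. t \<in> J \<Longrightarrow> (x has_vector_derivative sfield f g \<zeta> (x t)) (at t)"
  using assms unfolding is_sol_def by blast+

lemma is_sol_lipschitz_on:
  assumes "is_sol f g \<zeta> x0 J x"
  shows "(1 + \<bar>\<zeta>\<bar>)-lipschitz_on J x"
proof (rule bounded_derivative_imp_lipschitz)
  show "convex J"
    using is_solD(1)[OF assms] by (simp add: is_interval_convex_1)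
  fix t assume "t \<in> J"
  show "(x has_derivative (\<lambda>h. h *\<^sub>R sfield f g \<zeta> (x t))) (at t within J)"
    using is_solD(6)[OF assms \<open>t \<in> J\<close>] by (simp add: has_vector_derivative_def has_derivative_at_withinI)
  show "onorm (\<lambda>h. h *\<^sub>R sfield f g \<zeta> (x t)) \<le> 1 + \<bar>\<zeta>\<bar>"
    by (simp add: onorm_scaleR_left onorm_id norm_sfield_le)
qed simp

lemma is_sol_f_decrease_linear:
  assumes "C2 f" and "0 \<le> \<zeta>" and "\<zeta> \<le> 1" and sol: "is_sol f g \<zeta> x0 J x"
    and "t \<in> J" and "0 \<le> t" and c: "\<And>u. u \<in> {0..t} \<Longrightarrow> c \<le> norm (grad f (x u))"
  shows "f (x t) + (1 - \<zeta>) * c * t \<le> f x0"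
proof -
  have "f (x t) + (1 - \<zeta>) * c * t \<le> f (x 0) + (1 - \<zeta>) * c * 0"
  proof (rule DERIV_nonpos_imp_nonincreasing[OF \<open>0 \<le> t\<close>])
    fix u assume u: "0 \<le> u" "u \<le> t"
    then have "u \<in> J"
      by (intro mem_is_interval_1_I[OF is_solD(1,3)[OF sol] \<open>t \<in> J\<close>])
    have "((\<lambda>u. f (x u)) has_derivative (\<lambda>h. grad f (x u) \<bullet> (h *\<^sub>R sfield f g \<zeta> (x u)))) (at u)"
      using is_solD(6)[OF sol \<open>u \<in> J\<close>] C2_has_derivative_grad[OF assms(1)]
      unfolding has_vector_derivative_def by (rule has_derivative_compose)
    then have "((\<lambda>u. f (x u) + (1 - \<zeta>) * c * u) has_real_derivative
        grad f (x u) \<bullet> sfield f g \<zeta> (x u) + (1 - \<zeta>) * c) (at u)"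
      unfolding has_field_derivative_def
      by (auto intro!: derivative_eq_intros simp: algebra_simps)
    moreover have "(1 - \<zeta>) * c \<le> (1 - \<zeta>) * norm (grad f (x u))"
      using c[of u] u \<open>\<zeta> \<le> 1\<close> by (simp add: mult_left_mono)
    then have "grad f (x u) \<bullet> sfield f g \<zeta> (x u) + (1 - \<zeta>) * c \<le> 0"
      using inner_grad_sfield_le[OF \<open>0 \<le> \<zeta>\<close>, of f "x u" g] by (simp add: algebra_simps)
    ultimately show "\<exists>y. ((\<lambda>u. f (x u) + (1 - \<zeta>) * c * u) has_real_derivative y) (at u) \<and> y \<le> 0"
      by blast
  qed
  then show ?thesis
    using is_solD(4)[OF sol] by simp
qed

lemma is_sol_bdd_above_if_feasible:
  assumes coercive: "filterlim f at_top at_infinity" and grad_f: "\<forall>y\<in>{y. g y \<le> 0}. grad f y \<noteq> 0"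
    and "C2 f" and "C2 g" and "0 \<le> \<zeta>" and "\<zeta> < 1" and sol: "is_sol f g \<zeta> x0 J x"
    and feasible: "\<And>t. t \<in> J \<Longrightarrow> 0 \<le> t \<Longrightarrow> g (x t) \<le> 0"
  shows "bdd_above J"
proof -
  define K where "K = {y \<in> {y. g y \<le> 0}. f y \<le> f x0}"
  have "closed {y. g y \<le> 0}"
    using closed_Collect_le[OF C2_continuous_on[OF \<open>C2 g\<close>] continuous_on_const] .
  then have "compact K"
    unfolding K_def by (rule compact_sublevel_set[OF coercive C2_continuous_on[OF \<open>C2 f\<close>]])
  have inK: "x t \<in> K" if "t \<in> J" "0 \<le> t" for t
    using is_sol_f_decrease_linear[OF \<open>C2 f\<close> \<open>0 \<le> \<zeta>\<close> _ sol that, of 0] \<open>\<zeta> < 1\<close> feasible[OF that]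
    by (simp add: K_def)
  then have "K \<noteq> {}"
    using is_solD(3)[OF sol] by blast
  obtain ym where "ym \<in> K" and ym: "\<And>y. y \<in> K \<Longrightarrow> norm (grad f ym) \<le> norm (grad f y)"
    using continuous_attains_inf[OF \<open>compact K\<close> \<open>K \<noteq> {}\<close>, of "\<lambda>y. norm (grad f y)"]
      continuous_on_norm[OF C2_continuous_on_grad[OF \<open>C2 f\<close>]] by blast
  obtain yb where yb: "\<And>y. y \<in> K \<Longrightarrow> f yb \<le> f y"
    using continuous_attains_inf[OF \<open>compact K\<close> \<open>K \<noteq> {}\<close> C2_continuous_on[OF \<open>C2 f\<close>]] by blast
  define c where "c = norm (grad f ym)"
  have "0 < (1 - \<zeta>) * c"
    using grad_f \<open>ym \<in> K\<close> \<open>\<zeta> < 1\<close> by (simp add: c_def K_def)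
  have "t \<le> (f x0 - f yb) / ((1 - \<zeta>) * c)" if "t \<in> J" "0 \<le> t" for t
  proof -
    have "c \<le> norm (grad f (x u))" if "u \<in> {0..t}" for u
      using mem_is_interval_1_I[OF is_solD(1,3)[OF sol] \<open>t \<in> J\<close>, of u] that
      by (auto simp: c_def intro!: ym inK)
    then have "f (x t) + (1 - \<zeta>) * c * t \<le> f x0"
      using \<open>\<zeta> < 1\<close> by (intro is_sol_f_decrease_linear[OF \<open>C2 f\<close> \<open>0 \<le> \<zeta>\<close> _ sol that]) auto
    then show ?thesis
      using yb[OF inK[OF that]] \<open>0 < (1 - \<zeta>) * c\<close> by (simp add: pos_le_divide_eq mult.commute)
  qed
  then show "bdd_above J"
    by (intro bdd_aboveI[of _ "max 0 ((f x0 - f yb) / ((1 - \<zeta>) * c))"]) force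
qed

lemma is_sol_extend_right:
  assumes sol: "is_sol f g \<zeta> x0 J x" and "t0 \<in> J" and "J \<subseteq> {..<t1}"
    and z: "\<And>t. t \<in> {t0..t1} \<Longrightarrow>
      z t \<in> Eset f g \<and> (z has_vector_derivative sfield f g \<zeta> (z t)) (at t within {t0..t1})"
    and agree: "\<And>t. t \<in> J \<Longrightarrow> t0 \<le> t \<Longrightarrow> z t = x t"
  shows "is_sol f g \<zeta> x0 (J \<union> {t0<..<t1}) (\<lambda>t. if t \<in> J then x t else z t)"
proof -
  let ?y = "\<lambda>t. if t \<in> J then x t else z t"
  have "J \<union> {t0<..<t1} = J \<union> {t0..<t1}"
    using \<open>t0 \<in> J\<close> by auto
  moreover have "t0 \<in> J \<inter> {t0..<t1}"
    using \<open>t0 \<in> J\<close> \<open>J \<subseteq> {..<t1}\<close> by auto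
  then have "connected (J \<union> {t0..<t1})"
    using is_solD(1)[OF sol] by (intro connected_Un) (auto simp flip: is_interval_connected_1)
  ultimately have "is_interval (J \<union> {t0<..<t1})"
    by (simp add: is_interval_connected_1)
  moreover have "open (J \<union> {t0<..<t1})"
    using is_solD(2)[OF sol] by auto
  moreover have "?y t \<in> Eset f g \<and> (?y has_vector_derivative sfield f g \<zeta> (?y t)) (at t)"
    if "t \<in> J \<union> {t0<..<t1}" for t
  proof (cases "t \<in> J")
    case True
    have "(?y has_vector_derivative sfield f g \<zeta> (x t)) (at t)"
      by (rule has_vector_derivative_transform_within_open[OF is_solD(6)[OF sol True] is_solD(2)[OF sol] True])
        simp
    then show ?thesis
      using True is_solD(5)[OF sol True] by simp
  next
    case False
    then have t: "t \<in> {t0<..<t1}"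
      using that by blast
    have "(z has_vector_derivative sfield f g \<zeta> (z t)) (at t)"
      using z[of t] t at_within_Icc_at[of t0 t t1] by auto
    then have "(?y has_vector_derivative sfield f g \<zeta> (z t)) (at t)"
      by (rule has_vector_derivative_transform_within_open[OF _ open_greaterThanLessThan t])
        (use agree in auto)
    then show ?thesis
      using False z[of t] t by auto
  qed
  ultimately show ?thesis
    using is_solD(3,4)[OF sol] unfolding is_sol_def by auto
qed

lemma is_sol_eq_local_solution:
  assumes sol: "is_sol f g \<zeta> x0 J x" and L: "L-lipschitz_on S (sfield f g \<zeta>)" and "\<delta> * L < 1"
    and z: "\<And>t. t \<in> {t0..t0+\<delta>} \<Longrightarrow>
      z t \<in> S \<and> (z has_vector_derivative sfield f g \<zeta> (z t)) (at t within {t0..t0+\<delta>})"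
    and xS: "\<And>t. t \<in> J \<Longrightarrow> t0 \<le> t \<Longrightarrow> t \<le> t0 + \<delta> \<Longrightarrow> x t \<in> S"
    and "t0 \<in> J" and "z t0 = x t0" and "t \<in> J" and "t0 \<le> t" and "t \<le> t0 + \<delta>"
  shows "z t = x t"
proof -
  have "(t - t0) * L \<le> \<delta> * L"
    using \<open>t \<le> t0 + \<delta>\<close> lipschitz_on_nonneg[OF L] by (intro mult_right_mono) auto
  then have short: "(t - t0) * L < 1"
    using \<open>\<delta> * L < 1\<close> by linarith
  have sJ: "s \<in> J" and "s \<in> {t0..t0+\<delta>}" if "s \<in> {t0..t}" for s
    using mem_is_interval_1_I[OF is_solD(1)[OF sol] \<open>t0 \<in> J\<close> \<open>t \<in> J\<close>, of s] that \<open>t \<le> t0 + \<delta>\<close>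
    by auto
  have in_S: "z s \<in> S \<and> x s \<in> S" if "s \<in> {t0..t}" for s
    using z[of s] xS[of s] sJ[OF that] that \<open>t \<le> t0 + \<delta>\<close> by auto
  have z_deriv: "(z has_vector_derivative sfield f g \<zeta> (z s)) (at s within {t0..t})" if "s \<in> {t0..t}" for s
    using z[of s] that \<open>t \<le> t0 + \<delta>\<close> by (auto intro: has_vector_derivative_within_subset)
  have x_deriv: "(x has_vector_derivative sfield f g \<zeta> (x s)) (at s within {t0..t})" if "s \<in> {t0..t}" for s
    using is_solD(6)[OF sol sJ[OF that]] by (rule has_vector_derivative_at_within)
  show ?thesis
    using ode_solutions_eq_on_short_interval[OF L short in_S z_deriv x_deriv \<open>z t0 = x t0\<close>] \<open>t0 \<le> t\<close>
    by simp
qed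

lemma is_sol_extend_past_Sup:
  assumes "C2 f" and "C2 g" and sol: "is_sol f g \<zeta> x0 J x" and "bdd_above J"
    and lim: "(x \<longlongrightarrow> xs) (at_left (Sup J))" and "xs \<in> Eset f g"
  obtains J' y where "is_sol f g \<zeta> x0 J' y" and "J \<subseteq> J'" and "\<forall>t\<in>J. y t = x t" and "Sup J \<in> J'"
proof -
  define T where "T = Sup J"
  note T = open_interval_Sup[OF is_solD(1-3)[OF sol] \<open>bdd_above J\<close>, folded T_def]
  have "J \<subseteq> {..<T}"
    using cSup_upper[OF _ \<open>bdd_above J\<close>] T(1) by (force simp: T_def le_less)
  obtain R L where "0 < R" and RE: "cball xs R \<subseteq> Eset f g" and L: "L-lipschitz_on (cball xs R) (sfield f g \<zeta>)"
    by (rule sfield_locally_lipschitz[OF assms(1,2,6)])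
  obtain \<delta> where "0 < \<delta>" and "\<delta> * L < 1"
    and loc: "\<And>p t0. dist xs p < R / 2 \<Longrightarrow> \<exists>z. z t0 = p \<and> (\<forall>t\<in>{t0..t0+\<delta>}. z t \<in> cball xs R \<and>
           (z has_vector_derivative sfield f g \<zeta> (z t)) (at t within {t0..t0+\<delta>}))"
    using picard_uniform_local_existence[OF \<open>0 < R\<close> L] norm_sfield_le by blast
  have "eventually (\<lambda>t. T - \<delta> < t \<and> 0 < t) (at_left T)"
    unfolding eventually_at_left_field using T(2) \<open>0 < \<delta>\<close> by (intro exI[of _ "max (T - \<delta>) 0"]) auto
  moreover have "eventually (\<lambda>t. dist (x t) xs < R / 2) (at_left T)"
    using tendstoD[OF lim, of "R / 2"] \<open>0 < R\<close> by (simp add: T_def)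
  ultimately have "eventually (\<lambda>t. dist (x t) xs < R / 2 \<and> T - \<delta> < t \<and> 0 < t) (at_left T)"
    by eventually_elim auto
  then obtain b where "b < T" and near: "\<And>t. b < t \<Longrightarrow> t < T \<Longrightarrow> dist (x t) xs < R / 2 \<and> T - \<delta> < t \<and> 0 < t"
    unfolding eventually_at_left_field by blast
  txt \<open>\<open>t0\<close> is so close to \<open>T\<close> that the local solution started at \<open>x t0\<close> exists beyond \<open>T\<close>.\<close>
  define t0 where "t0 = (b + T) / 2"
  have "b < t0" and "t0 < T"
    using \<open>b < T\<close> by (simp_all add: t0_def)
  then have "T < t0 + \<delta>" and "t0 \<in> J"
    using near[of t0] T(3) by auto
  obtain z where "z t0 = x t0" and z: "\<And>t. t \<in> {t0..t0+\<delta>} \<Longrightarrow> z t \<in> cball xs R \<and>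
      (z has_vector_derivative sfield f g \<zeta> (z t)) (at t within {t0..t0+\<delta>})"
    using loc[of "x t0" t0] near[of t0] \<open>b < t0\<close> \<open>t0 < T\<close> by (auto simp: dist_commute)
  have "x t \<in> cball xs R" if "t \<in> J" "t0 \<le> t" for t
    using near[of t] \<open>b < t0\<close> \<open>J \<subseteq> {..<T}\<close> \<open>0 < R\<close> that by (auto simp: dist_commute)
  then have "z t = x t" if "t \<in> J" "t0 \<le> t" for t
    using is_sol_eq_local_solution[OF sol L \<open>\<delta> * L < 1\<close> z _ \<open>t0 \<in> J\<close> \<open>z t0 = x t0\<close> that]
      \<open>J \<subseteq> {..<T}\<close> \<open>T < t0 + \<delta>\<close> that by force
  then have "is_sol f g \<zeta> x0 (J \<union> {t0<..<t0+\<delta>}) (\<lambda>t. if t \<in> J then x t else z t)"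
    using \<open>J \<subseteq> {..<T}\<close> \<open>T < t0 + \<delta>\<close> z RE
    by (intro is_sol_extend_right[OF sol \<open>t0 \<in> J\<close>]) auto
  then show ?thesis
    using that \<open>t0 < T\<close> \<open>T < t0 + \<delta>\<close> by (auto simp: T_def)
qed

lemma is_max_sol_left_limit_notin_Eset:
  assumes "C2 f" and "C2 g" and "is_max_sol f g \<zeta> x0 J x" and "bdd_above J"
    and "(x \<longlongrightarrow> xs) (at_left (Sup J))"
  shows "xs \<notin> Eset f g"
proof
  assume "xs \<in> Eset f g"
  have sol: "is_sol f g \<zeta> x0 J x"
    and maximal: "\<And>J' y. is_sol f g \<zeta> x0 J' y \<Longrightarrow> J \<subseteq> J' \<Longrightarrow> \<forall>t\<in>J. y t = x t \<Longrightarrow> J' = J"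
    using assms(3) unfolding is_max_sol_def by blast+
  obtain J' y where "is_sol f g \<zeta> x0 J' y" and "J \<subseteq> J'" and "\<forall>t\<in>J. y t = x t" and "Sup J \<in> J'"
    by (rule is_sol_extend_past_Sup[OF assms(1,2) sol assms(4,5) \<open>xs \<in> Eset f g\<close>])
  then have "Sup J \<in> J"
    using maximal by blast
  then show False
    using open_interval_Sup(1)[OF is_solD(1-3)[OF sol] assms(4)] by contradiction
qed

lemma is_max_sol_exits_feasible_set:
  assumes coercive: "filterlim f at_top at_infinity"
    and grad_f: "\<forall>y\<in>{y. g y \<le> 0}. grad f y \<noteq> 0" and grad_g: "\<forall>y\<in>{y. g y \<le> 0}. grad g y \<noteq> 0"
    and "C2 f" and "C2 g" and "0 \<le> \<zeta>" and "\<zeta> < 1" and max_sol: "is_max_sol f g \<zeta> x0 J x"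
  obtains t where "t \<in> J" and "0 \<le> t" and "0 < g (x t)"
proof -
  have "\<exists>t\<in>J. 0 \<le> t \<and> 0 < g (x t)"
  proof (rule ccontr)
    assume "\<not> ?thesis"
    then have feasible: "\<And>t. t \<in> J \<Longrightarrow> 0 \<le> t \<Longrightarrow> g (x t) \<le> 0"
      by (auto simp: not_less)
    have sol: "is_sol f g \<zeta> x0 J x"
      using max_sol by (simp add: is_max_sol_def)
    have "bdd_above J"
      using is_sol_bdd_above_if_feasible[OF coercive grad_f assms(4-7) sol feasible] .
    note T = open_interval_Sup[OF is_solD(1-3)[OF sol] this]
    obtain xs where lim: "(x \<longlongrightarrow> xs) (at_left (Sup J))"
      using lipschitz_on_tendsto_at_left[OF lipschitz_on_subset[OF is_sol_lipschitz_on[OF sol] T(3)] T(2)] .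
    have "eventually (\<lambda>t. x t \<in> {y. g y \<le> 0}) (at_left (Sup J))"
      unfolding eventually_at_left_field using T feasible by (intro exI[of _ 0]) (auto simp: subset_iff)
    then have "xs \<in> {y. g y \<le> 0}"
      using lim closed_Collect_le[OF C2_continuous_on[OF \<open>C2 g\<close>] continuous_on_const]
      by (intro Lim_in_closed_set) auto
    then have "xs \<in> Eset f g"
      using grad_f grad_g by (simp add: Eset_def)
    then show False
      using is_max_sol_left_limit_notin_Eset[OF assms(4,5) max_sol \<open>bdd_above J\<close> lim] by contradiction
  qed
  then obtain t where "t \<in> J" and "0 \<le> t" and "0 < g (x t)"
    by blast
  then show ?thesis
    by (rule that)
qed

theorem lemma5p9:
  fixes f g :: "'a::euclidean_space \<Rightarrow> real"
    and \<zeta> :: real and x0 :: 'a and J :: "real set" and x :: "real \<Rightarrow> 'a"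
  assumes A1: "filterlim f at_top at_infinity"
    and A2: "\<forall>y\<in>{y. g y \<le> 0}. grad f y \<noteq> 0"
    and A3: "\<forall>y\<in>{y. g y \<le> 0}. grad g y \<noteq> 0"
    and A4: "C2 f" "C2 g"
    and zeta: "0 \<le> \<zeta>" "\<zeta> < 1"
    and x0: "x0 \<in> {y. g y \<le> 0}"
    and traj: "is_max_sol f g \<zeta> x0 J x"
  shows "(\<exists>t\<in>J. 0 \<le> t \<and> x t \<notin> {y. g y \<le> 0}) \<and>
         (\<exists>ts\<in>J. 0 \<le> ts \<and> g (x ts) = 0 \<and> (\<forall>t. 0 \<le> t \<and> t < ts \<longrightarrow> g (x t) < 0))"
proof -
  have sol: "is_sol f g \<zeta> x0 J x"
    using traj by (simp add: is_max_sol_def)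
  obtain t1 where "t1 \<in> J" and "0 \<le> t1" and "0 < g (x t1)"
    by (rule is_max_sol_exits_feasible_set[OF A1 A2 A3 A4 zeta traj])
  have "{0..t1} \<subseteq> J"
    using mem_is_interval_1_I[OF is_solD(1,3)[OF sol] \<open>t1 \<in> J\<close>] by auto
  then have "continuous_on {0..t1} (\<lambda>t. g (x t))"
    using lipschitz_on_continuous_on[OF is_sol_lipschitz_on[OF sol]]
    by (intro continuous_on_compose2[OF C2_continuous_on[OF A4(2)]]) (auto intro: continuous_on_subset)
  then obtain ts where "ts \<in> {0..t1}" and "g (x ts) = 0" and "\<And>t. 0 \<le> t \<Longrightarrow> t < ts \<Longrightarrow> g (x t) < 0"
    using IVT_first_zero[OF \<open>0 \<le> t1\<close>] x0 is_solD(4)[OF sol] \<open>0 < g (x t1)\<close> by auto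
  then have "\<exists>ts\<in>J. 0 \<le> ts \<and> g (x ts) = 0 \<and> (\<forall>t. 0 \<le> t \<and> t < ts \<longrightarrow> g (x t) < 0)"
    using \<open>{0..t1} \<subseteq> J\<close> by (intro bexI[of _ ts]) auto
  moreover have "\<exists>t\<in>J. 0 \<le> t \<and> x t \<notin> {y. g y \<le> 0}"
    using \<open>t1 \<in> J\<close> \<open>0 \<le> t1\<close> \<open>0 < g (x t1)\<close> by (intro bexI[of _ t1]) auto
  ultimately show ?thesis
    by blast
qed

end
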